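(* Let $\delta \geq \gamma > 0$ and let $G$ be a graph on $t$ vertices whose edges are coloured with $r$ colours, with minimum degree $\delta(G) \geq \delta t$. Then $G$ contains a spanning subgraph $R$ with $\delta(R) \geq (\delta - \gamma) t$ which is the union of at most $r^2/\gamma$ monochromatic components of $G$.
   Context: A monochromatic component of an edge-coloured graph $G$ is a connected component of the subgraph of $G$ consisting of all edges of a single colour (and their endpoints). $\delta(\cdot)$ denotes minimum degree. *)

theory Defs
  imports Complex_Main
begin

definition simple_graph :: "'a set \<Rightarrow> ('a \<Rightarrow> 'a \<Rightarrow> bool) \<Rightarrow> bool" where
  "simple_graph V E \<longleftrightarrow> finite V \<and> (\<forall>x y. E x y \<longrightarrow> x \<in> V \<and> y \<in> V \<and> x \<noteq> y \<and> E y x)"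

definition degree :: "'a set \<Rightarrow> ('a \<Rightarrow> 'a \<Rightarrow> bool) \<Rightarrow> 'a \<Rightarrow> nat" where
  "degree V E v = card {u \<in> V. E v u}"

definition edge_colouring :: "('a \<Rightarrow> 'a \<Rightarrow> bool) \<Rightarrow> nat \<Rightarrow> ('a \<Rightarrow> 'a \<Rightarrow> nat) \<Rightarrow> bool" where
  "edge_colouring E r c \<longleftrightarrow> (\<forall>x y. E x y \<longrightarrow> c x y < r \<and> c x y = c y x)"

definition mono_edge :: "('a \<Rightarrow> 'a \<Rightarrow> bool) \<Rightarrow> ('a \<Rightarrow> 'a \<Rightarrow> nat) \<Rightarrow> nat \<Rightarrow> 'a \<Rightarrow> 'a \<Rightarrow> bool" where
  "mono_edge E c i x y \<longleftrightarrow> E x y \<and> c x y = i"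

text \<open>C is (the vertex set of) a connected component of the subgraph formed by all
  edges of colour i and their endpoints; its edges are the colour-i edges inside C.\<close>
definition mono_component :: "('a \<Rightarrow> 'a \<Rightarrow> bool) \<Rightarrow> ('a \<Rightarrow> 'a \<Rightarrow> nat) \<Rightarrow> nat \<Rightarrow> 'a set \<Rightarrow> bool" where
  "mono_component E c i C \<longleftrightarrow>
     (\<exists>v. (\<exists>u. mono_edge E c i v u) \<and> C = {u. (mono_edge E c i)\<^sup>*\<^sup>* v u})"

definition union_edges :: "('a \<Rightarrow> 'a \<Rightarrow> bool) \<Rightarrow> ('a \<Rightarrow> 'a \<Rightarrow> nat) \<Rightarrow> (nat \<times> 'a set) set \<Rightarrow> 'a \<Rightarrow> 'a \<Rightarrow> bool" where
  "union_edges E c S x y \<longleftrightarrow> (\<exists>(i, C) \<in> S. x \<in> C \<and> y \<in> C \<and> mono_edge E c i x y)"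

end

theory Submission
  imports Defs
begin

text \<open>Keep exactly the monochromatic components with at least \<open>\<gamma> t / r\<close> vertices. Components of
  one colour are disjoint, so each colour contributes at most \<open>r / \<gamma>\<close> of them, \<open>r\<^sup>2 / \<gamma>\<close> in total.
  An edge at \<open>v\<close> is lost only if the component of its colour containing \<open>v\<close> is small; these lost
  edges end inside that small component, so fewer than \<open>\<gamma> t / r\<close> are lost per colour and fewer
  than \<open>\<gamma> t\<close> overall. Hence every vertex keeps degree \<open>> (\<delta> - \<gamma>) t \<ge> 0\<close>, which also makes the
  kept components cover \<open>V\<close>.\<close>

definition mono_reachable :: "('a \<Rightarrow> 'a \<Rightarrow> bool) \<Rightarrow> ('a \<Rightarrow> 'a \<Rightarrow> nat) \<Rightarrow> nat \<Rightarrow> 'a \<Rightarrow> 'a set" where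
  "mono_reachable E c i v = {u. (mono_edge E c i)\<^sup>*\<^sup>* v u}"

definition big_mono_components ::
    "('a \<Rightarrow> 'a \<Rightarrow> bool) \<Rightarrow> ('a \<Rightarrow> 'a \<Rightarrow> nat) \<Rightarrow> nat \<Rightarrow> real \<Rightarrow> (nat \<times> 'a set) set" where
  "big_mono_components E c r m = {(i, C). i < r \<and> mono_component E c i C \<and> m \<le> real (card C)}"

lemma mono_edge_sym:
  assumes "edge_colouring E r c" "simple_graph V E" "mono_edge E c i x y"
  shows "mono_edge E c i y x"
  using assms unfolding simple_graph_def edge_colouring_def mono_edge_def by metis

lemma mono_edge_in_vertices:
  assumes "simple_graph V E" "mono_edge E c i x y"
  shows "x \<in> V" "y \<in> V"
  using assms unfolding simple_graph_def mono_edge_def by blast+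

lemma edge_colouring_pos:
  assumes "edge_colouring E r c" "E x y"
  shows "r > 0"
  using assms unfolding edge_colouring_def by fastforce

lemma degree_pos_iff:
  assumes "finite V"
  shows "degree V R v > 0 \<longleftrightarrow> (\<exists>u \<in> V. R v u)"
  using assms unfolding degree_def by (auto simp: card_gt_0_iff)

lemma mono_reachable_subset:
  assumes "simple_graph V E" "v \<in> V"
  shows "mono_reachable E c i v \<subseteq> V"
proof
  fix u assume "u \<in> mono_reachable E c i v"
  then have "(mono_edge E c i)\<^sup>*\<^sup>* v u" by (simp add: mono_reachable_def)
  then show "u \<in> V"
  proof (induction rule: rtranclp_induct)
    case (step x y)
    then show ?case using mono_edge_in_vertices(2)[OF assms(1)] by blast
  qed (use assms(2) in simp)
qed

lemma mono_component_eq_mono_reachable: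
  assumes "edge_colouring E r c" "simple_graph V E" "mono_component E c i C" "x \<in> C"
  shows "C = mono_reachable E c i x"
proof -
  obtain v where C: "C = {u. (mono_edge E c i)\<^sup>*\<^sup>* v u}"
    using assms(3) unfolding mono_component_def by blast
  have "symp (mono_edge E c i)"
    using mono_edge_sym[OF assms(1,2)] by (meson sympI)
  then have "(mono_edge E c i)\<^sup>*\<^sup>* x v"
    using C assms(4) by (blast dest: sympD[OF symp_rtranclp])
  then show ?thesis
    using C assms(4) unfolding mono_reachable_def by (blast intro: rtranclp_trans)
qed

lemma mono_component_subset:
  assumes "simple_graph V E" "mono_component E c i C"
  shows "C \<subseteq> V"
proof -
  obtain v u where "mono_edge E c i v u" "C = mono_reachable E c i v"
    using assms(2) unfolding mono_component_def mono_reachable_def by blast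
  then show ?thesis
    using mono_reachable_subset[OF assms(1)] mono_edge_in_vertices[OF assms(1)] by blast
qed

lemma mono_components_disjoint:
  assumes "edge_colouring E r c" "simple_graph V E"
  shows "pairwise disjnt {C. mono_component E c i C}"
  using mono_component_eq_mono_reachable[OF assms]
  unfolding pairwise_def disjnt_def by blast

lemma card_disjoint_family_le:
  fixes m :: real
  assumes "finite V" "\<F> \<subseteq> Pow V" "pairwise disjnt \<F>" "\<And>C. C \<in> \<F> \<Longrightarrow> m \<le> real (card C)"
  shows "real (card \<F>) * m \<le> real (card V)"
proof -
  have fin: "finite C" if "C \<in> \<F>" for C
    using that assms(1,2) finite_subset by blast
  have "real (card \<F>) * m = (\<Sum>C\<in>\<F>. m)" by simp
  also have "\<dots> \<le> (\<Sum>C\<in>\<F>. real (card C))" by (rule sum_mono) (rule assms(4))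
  also have "\<dots> = real (card (\<Union>\<F>))"
    by (simp add: card_Union_disjoint[OF assms(3) fin])
  also have "\<dots> \<le> real (card V)"
    using assms(2) by (intro of_nat_mono card_mono[OF assms(1)]) blast
  finally show ?thesis .
qed

lemma finite_big_mono_components:
  assumes "simple_graph V E"
  shows "finite (big_mono_components E c r m)"
proof -
  have "big_mono_components E c r m \<subseteq> {..<r} \<times> Pow V"
    using mono_component_subset[OF assms] unfolding big_mono_components_def by blast
  moreover have "finite V" using assms unfolding simple_graph_def by blast
  ultimately show ?thesis by (simp add: finite_subset)
qed

lemma card_big_mono_components_le:
  assumes "edge_colouring E r c" "simple_graph V E" "m > 0"
  shows "real (card (big_mono_components E c r m)) \<le> real r * real (card V) / m"
proof -
  define B where "B i = {C. mono_component E c i C \<and> m \<le> real (card C)}" for i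
  have finV: "finite V" using assms(2) unfolding simple_graph_def by blast
  have BV: "B i \<subseteq> Pow V" for i
    using mono_component_subset[OF assms(2)] unfolding B_def by blast
  have "B i \<subseteq> {C. mono_component E c i C}" for i unfolding B_def by blast
  then have "real (card (B i)) * m \<le> real (card V)" for i
    using card_disjoint_family_le[OF finV BV] pairwise_subset[OF mono_components_disjoint[OF assms(1,2)]]
    unfolding B_def by blast
  then have cardB: "real (card (B i)) \<le> real (card V) / m" for i
    using assms(3) by (simp add: pos_le_divide_eq)
  have "big_mono_components E c r m = (SIGMA i:{..<r}. B i)"
    unfolding big_mono_components_def B_def by auto
  moreover have "finite (B i)" for i
    using BV finV by (meson finite_Pow_iff finite_subset)
  ultimately have "real (card (big_mono_components E c r m)) = (\<Sum>i<r. real (card (B i)))"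
    by simp
  also have "\<dots> \<le> (\<Sum>i<r. real (card V) / m)" by (rule sum_mono) (rule cardB)
  finally show ?thesis by simp
qed

lemma union_edges_big_mono_components_iff:
  assumes "edge_colouring E r c" "simple_graph V E"
  shows "union_edges E c (big_mono_components E c r m) v u \<longleftrightarrow>
           E v u \<and> m \<le> real (card (mono_reachable E c (c v u) v))"
proof
  assume "union_edges E c (big_mono_components E c r m) v u"
  then obtain i C where "i < r" "mono_component E c i C" "m \<le> real (card C)"
      "v \<in> C" "mono_edge E c i v u"
    unfolding union_edges_def big_mono_components_def by blast
  then show "E v u \<and> m \<le> real (card (mono_reachable E c (c v u) v))"
    using mono_component_eq_mono_reachable[OF assms] unfolding mono_edge_def by blast
next
  assume big: "E v u \<and> m \<le> real (card (mono_reachable E c (c v u) v))"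
  let ?i = "c v u" and ?C = "mono_reachable E c (c v u) v"
  have edge: "mono_edge E c ?i v u" using big unfolding mono_edge_def by simp
  then have "?i < r" using assms(1) unfolding edge_colouring_def mono_edge_def by blast
  moreover have "mono_component E c ?i ?C"
    unfolding mono_component_def mono_reachable_def using edge by blast
  moreover have "v \<in> ?C" "u \<in> ?C" unfolding mono_reachable_def using edge by auto
  ultimately show "union_edges E c (big_mono_components E c r m) v u"
    using big edge unfolding union_edges_def big_mono_components_def by blast
qed

lemma degree_union_big_mono_components:
  assumes "edge_colouring E r c" "simple_graph V E" "v \<in> V" "m > 0" "r > 0"
  shows "real (degree V E v) < real (degree V (union_edges E c (big_mono_components E c r m)) v) + r * m"
proof -
  define Kept where "Kept = {u \<in> V. union_edges E c (big_mono_components E c r m) v u}"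
  define Lost where "Lost i = {u. mono_edge E c i v u \<and> real (card (mono_reachable E c i v)) < m}" for i
  have finV: "finite V" using assms(2) unfolding simple_graph_def by blast
  have Lost_sub: "Lost i \<subseteq> V" for i
    using mono_edge_in_vertices[OF assms(2)] unfolding Lost_def by blast
  have card_Lost: "real (card (Lost i)) < m" for i
  proof (cases "real (card (mono_reachable E c i v)) < m")
    case True
    have "Lost i \<subseteq> mono_reachable E c i v" unfolding Lost_def mono_reachable_def by auto
    then have "card (Lost i) \<le> card (mono_reachable E c i v)"
      using mono_reachable_subset[OF assms(2,3)] finV by (meson card_mono finite_subset)
    then show ?thesis using True by linarith
  qed (use assms(4) Lost_def in simp)
  have "c v u < r" if "E v u" for u
    using assms(1) that unfolding edge_colouring_def by blast
  then have "{u \<in> V. E v u} \<subseteq> Kept \<union> (\<Union>i<r. Lost i)"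
    unfolding Kept_def Lost_def union_edges_big_mono_components_iff[OF assms(1,2)] mono_edge_def by auto
  then have "card {u \<in> V. E v u} \<le> card (Kept \<union> (\<Union>i<r. Lost i))"
    by (rule card_mono[rotated]) (use finV Lost_sub in \<open>auto simp: Kept_def intro: finite_subset\<close>)
  also have "\<dots> \<le> card Kept + card (\<Union>i<r. Lost i)" by (rule card_Un_le)
  also have "\<dots> \<le> card Kept + (\<Sum>i<r. card (Lost i))" using card_UN_le[of "{..<r}" Lost] by simp
  finally have "real (degree V E v) \<le> real (card Kept) + (\<Sum>i<r. real (card (Lost i)))"
    unfolding degree_def by (metis of_nat_le_iff of_nat_add of_nat_sum)
  also have "(\<Sum>i<r. real (card (Lost i))) < (\<Sum>i<r. m)"
    using assms(5) by (intro sum_strict_mono) (auto intro: card_Lost)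
  finally show ?thesis unfolding Kept_def degree_def by simp
qed

theorem lemma6p10:
  fixes V :: "'a set" and E :: "'a \<Rightarrow> 'a \<Rightarrow> bool" and c :: "'a \<Rightarrow> 'a \<Rightarrow> nat"
    and r :: nat and \<delta> \<gamma> :: real
  assumes "simple_graph V E"
    and "edge_colouring E r c"
    and "\<gamma> > 0" and "\<delta> \<ge> \<gamma>"
    and "\<forall>v \<in> V. real (degree V E v) \<ge> \<delta> * real (card V)"
  shows "\<exists>S. finite S \<and> (\<forall>(i, C) \<in> S. mono_component E c i C)
           \<and> real (card S) \<le> real r ^ 2 / \<gamma>
           \<and> (\<Union>(i, C) \<in> S. C) = V
           \<and> (\<forall>v \<in> V. real (degree V (union_edges E c S) v) \<ge> (\<delta> - \<gamma>) * real (card V))"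
proof (cases "V = {}")
  case True
  then show ?thesis using assms(3) by (intro exI[of _ "{}"]) auto
next
  case False
  define t where "t = card V"
  have "finite V" using assms(1) unfolding simple_graph_def by blast
  then have "t > 0" using False unfolding t_def by (simp add: card_gt_0_iff)
  obtain v where "v \<in> V" using False by blast
  have "0 < \<delta> * real t" using assms(3,4) \<open>t > 0\<close> by simp
  then have "degree V E v > 0" using bspec[OF assms(5) \<open>v \<in> V\<close>] unfolding t_def by linarith
  then obtain u where "E v u" using degree_pos_iff[OF \<open>finite V\<close>] by blast
  then have "r > 0" by (rule edge_colouring_pos[OF assms(2)])
  define m where "m = \<gamma> * real t / real r"
  have "m > 0" using \<open>r > 0\<close> \<open>t > 0\<close> assms(3) unfolding m_def by simp
  have rm: "real r * m = \<gamma> * real t" using \<open>r > 0\<close> unfolding m_def by simp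
  define S where "S = big_mono_components E c r m"
  have deg: "(\<delta> - \<gamma>) * real t < real (degree V (union_edges E c S) v)" if "v \<in> V" for v
    using degree_union_big_mono_components[OF assms(2,1) that \<open>m > 0\<close> \<open>r > 0\<close>]
      bspec[OF assms(5) that]
    unfolding S_def rm t_def left_diff_distrib by linarith
  have "0 \<le> (\<delta> - \<gamma>) * real t" using assms(4) by simp
  with deg have "\<exists>u \<in> V. union_edges E c S v u" if "v \<in> V" for v
    using degree_pos_iff[OF \<open>finite V\<close>] that by (metis of_nat_0_less_iff order_le_less_trans)
  then have "(\<Union>(i, C) \<in> S. C) = V"
    using mono_component_subset[OF assms(1)]
    unfolding S_def union_edges_def big_mono_components_def by fast
  moreover have "real (card S) \<le> real r ^ 2 / \<gamma>"
    using card_big_mono_components_le[OF assms(2,1) \<open>m > 0\<close>] \<open>t > 0\<close> \<open>r > 0\<close>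
    unfolding S_def m_def t_def by (simp add: power2_eq_square)
  moreover have "finite S" unfolding S_def by (rule finite_big_mono_components[OF assms(1)])
  moreover have "\<forall>(i, C) \<in> S. mono_component E c i C"
    unfolding S_def big_mono_components_def by blast
  ultimately show ?thesis using deg unfolding t_def by (intro exI[of _ S]) (auto intro: less_imp_le)
qed

end
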